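(* Let $0<m<L$, $\kappa=L/m$, $\delta\in(0,1)$, and suppose $\alpha>\alpha_-:=\frac{1}{1-\delta}\left(\frac{2}{L+m}-\frac{\delta}{m}\right)$ and \[ \frac1L\le\alpha\le\frac{2}{(1+\delta)L+(1-\delta)m}. \] Define \begin{multline*} F(t,\rho,\lambda,\gamma) = -\alpha^2\big((L-m)^2-2mL\lambda(1-\delta^2)\big)\rho^2-\gamma^2(t-1+L\alpha)^2 + 2\lambda\alpha\rho^2(L+m)(t-1) \\ + \lambda\rho^2(2-\lambda\delta^2)(t-1)^2 - 2\alpha\gamma\big((L-m)-m\lambda(1-\delta^2)\big)(1-\alpha L-t)t + 2\lambda\gamma\big((1-\alpha L)t-\rho^2\big)(t-1), \end{multline*} and set $\rho_\star=1-\alpha m(1-\delta)$, $\lambda_\star=\dfrac{2-\alpha(L+m)}{\delta^2}$, and \[ \gamma_\star=\frac{\rho_\star\big(\kappa-1+(\kappa+1)(\delta-\rho_\star)\big)}{(\kappa-(1-\delta))\,\delta}. \] Then $\partial_t F(0,\rho_\star,\lambda_\star,\gamma_\star)\le 0$.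
   Context: $\partial_t F$ denotes the partial derivative of $F$ with respect to its first argument $t$. *)

theory Defs
  imports "HOL-Analysis.Analysis"
begin

definition F_fun :: "real \<Rightarrow> real \<Rightarrow> real \<Rightarrow> real \<Rightarrow> real \<Rightarrow> real \<Rightarrow> real \<Rightarrow> real \<Rightarrow> real" where
  "F_fun \<alpha> L m \<delta> t \<rho> lam \<gamma> =
     - (\<alpha> ^ 2) * ((L - m) ^ 2 - 2 * m * L * lam * (1 - \<delta> ^ 2)) * \<rho> ^ 2
     - \<gamma> ^ 2 * (t - 1 + L * \<alpha>) ^ 2
     + 2 * lam * \<alpha> * \<rho> ^ 2 * (L + m) * (t - 1)
     + lam * \<rho> ^ 2 * (2 - lam * \<delta> ^ 2) * (t - 1) ^ 2
     - 2 * \<alpha> * \<gamma> * ((L - m) - m * lam * (1 - \<delta> ^ 2)) * (1 - \<alpha> * L - t) * t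
     + 2 * lam * \<gamma> * ((1 - \<alpha> * L) * t - \<rho> ^ 2) * (t - 1)"

end

theory Submission
  imports Defs
begin

text \<open>Write \<open>a = \<alpha>L - 1\<close> and \<open>b = \<lambda>\<^sub>\<star>\<delta>\<^sup>2 = 2 - \<alpha>(L + m)\<close>, so that \<open>\<alpha>m = 1 - a - b\<close>,
  \<open>\<alpha>(L - m) = 2a + b\<close> and \<open>\<rho>\<^sub>\<star> = a + b + \<alpha>m\<delta>\<close>. The choice of \<open>\<lambda>\<^sub>\<star>\<close> cancels the only term of
  \<open>\<partial>\<^sub>tF(0)\<close> without a factor \<open>\<gamma>\<close>, leaving \<open>\<partial>\<^sub>tF(0) = 2\<gamma>(-a\<gamma> + B)\<close>. The step-size bounds say
  \<open>a \<ge> 0\<close> and \<open>\<delta>(2a + b) \<le> b\<close>, and in the variables \<open>a, b\<close> the coefficient \<open>B\<close> is seen to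
  be nonpositive by three elementary estimates. Finally \<open>\<alpha> > \<alpha>\<^sub>-\<close> is exactly what makes
  \<open>\<gamma>\<^sub>\<star>\<close> nonnegative.\<close>

lemma deriv_F_fun_at_0:
  "deriv (\<lambda>t. F_fun \<alpha> L m \<delta> t \<rho> lam \<gamma>) 0 =
     2 * \<gamma> * (- (\<alpha> * L - 1) * \<gamma> + \<alpha> * ((L - m) - m * lam * (1 - \<delta>\<^sup>2)) * (\<alpha> * L - 1)
                + lam * (\<alpha> * L - 1 - \<rho>\<^sup>2))
     + 2 * lam * \<rho>\<^sup>2 * (\<alpha> * (L + m) + lam * \<delta>\<^sup>2 - 2)"
  unfolding F_fun_def
  apply (rule DERIV_imp_deriv)
  apply (rule derivative_eq_intros refl | simp)+
  apply (simp add: algebra_simps power2_eq_square)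
  done

lemma cubic_bracket_nonpos:
  fixes a b x \<delta> :: real
  assumes a: "0 \<le> a" and x: "0 \<le> x" and \<delta>: "0 \<le> \<delta>" "\<delta> < 1"
    and sum: "a + b + x = 1" and upper: "\<delta> * (2 * a + b) \<le> b"
  shows "a * (\<delta>\<^sup>2 * (2 * a + b) - x * b * (1 - \<delta>\<^sup>2)) + b * (a - (a + b + x * \<delta>)\<^sup>2) \<le> 0"
proof -
  have "0 \<le> 2 * a * \<delta>" using a \<delta> by simp
  also have "2 * a * \<delta> \<le> (1 - \<delta>) * b" using upper by (simp add: algebra_simps)
  finally have b: "0 \<le> b" using \<delta> by (simp add: zero_le_mult_iff)
  have ab: "a * \<delta> \<le> b"
    using \<open>2 * a * \<delta> \<le> (1 - \<delta>) * b\<close> \<open>0 \<le> 2 * a * \<delta>\<close> mult_nonneg_nonneg[OF \<delta>(1) b]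
    by (simp add: algebra_simps)
  have "a * (\<delta>\<^sup>2 * (2 * a + b) - x * b * (1 - \<delta>\<^sup>2)) + b * (a - (a + b + x * \<delta>)\<^sup>2)
      = (a * \<delta>) * (\<delta> * (2 * a + b)) - b\<^sup>2 * (a + b) - a * b * x * \<delta> * (2 - \<delta>)
        - 2 * b\<^sup>2 * x * \<delta> - b * (x * \<delta>)\<^sup>2"
    using sum by algebra
  also have "\<dots> \<le> (a * \<delta>) * b - b\<^sup>2 * (a + b) - a * b * x * \<delta>"
  proof -
    have "(a * \<delta>) * (\<delta> * (2 * a + b)) \<le> (a * \<delta>) * b"
      using upper a \<delta> by (simp add: mult_left_mono)
    moreover have "a * b * x * \<delta> \<le> a * b * x * \<delta> * (2 - \<delta>)"
      using mult_left_mono[of 1 "2 - \<delta>" "a * b * x * \<delta>"] a b x \<delta> by simp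
    moreover have "0 \<le> 2 * b\<^sup>2 * x * \<delta> + b * (x * \<delta>)\<^sup>2"
      using b x \<delta> by simp
    ultimately show ?thesis by linarith
  qed
  also have "\<dots> = b * (a + b) * (a * \<delta> - b)"
    using sum by algebra
  also have "\<dots> \<le> 0"
    using a b ab by (simp add: mult_nonneg_nonpos)
  finally show ?thesis .
qed

lemma deriv_F_fun_bracket_nonpos:
  fixes \<alpha> L m \<delta> \<rho> lam :: real
  assumes \<delta>: "0 < \<delta>" "\<delta> < 1" and "0 \<le> \<alpha> * m" and "1 \<le> \<alpha> * L"
    and upper: "\<alpha> * ((1 + \<delta>) * L + (1 - \<delta>) * m) \<le> 2"
    and lam: "lam * \<delta>\<^sup>2 = 2 - \<alpha> * (L + m)" and \<rho>: "\<rho> = 1 - \<alpha> * m * (1 - \<delta>)"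
  shows "\<alpha> * ((L - m) - m * lam * (1 - \<delta>\<^sup>2)) * (\<alpha> * L - 1) + lam * (\<alpha> * L - 1 - \<rho>\<^sup>2) \<le> 0"
proof -
  define a b where "a = \<alpha> * L - 1" and "b = 2 - \<alpha> * (L + m)"
  have "\<delta>\<^sup>2 * (\<alpha> * ((L - m) - m * lam * (1 - \<delta>\<^sup>2)) * (\<alpha> * L - 1) + lam * (\<alpha> * L - 1 - \<rho>\<^sup>2))
      = a * (\<delta>\<^sup>2 * (2 * a + b) - (\<alpha> * m) * b * (1 - \<delta>\<^sup>2)) + b * (a - (a + b + (\<alpha> * m) * \<delta>)\<^sup>2)"
    unfolding a_def b_def \<rho> using lam by algebra
  also have "\<dots> \<le> 0"
  proof (rule cubic_bracket_nonpos)
    show "\<delta> * (2 * a + b) \<le> b"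
      using upper unfolding a_def b_def by (simp add: algebra_simps)
  qed (use assms in \<open>auto simp: a_def b_def algebra_simps\<close>)
  finally show ?thesis
    using \<delta> by (simp add: mult_le_0_iff)
qed

lemma gamma_star_nonneg:
  fixes m L \<kappa> \<delta> \<alpha> \<rho> :: real
  assumes m: "0 < m" "m < L" and \<kappa>: "\<kappa> = L / m" and \<delta>: "0 < \<delta>" "\<delta> < 1"
    and lower: "\<alpha> > (1 / (1 - \<delta>)) * (2 / (L + m) - \<delta> / m)"
    and "0 \<le> \<alpha>" and upper: "\<alpha> * ((1 + \<delta>) * L + (1 - \<delta>) * m) \<le> 2"
    and \<rho>: "\<rho> = 1 - \<alpha> * m * (1 - \<delta>)"
  shows "0 \<le> \<rho> * (\<kappa> - 1 + (\<kappa> + 1) * (\<delta> - \<rho>)) / ((\<kappa> - (1 - \<delta>)) * \<delta>)"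
proof -
  have L: "L = m * \<kappa>"
    using m \<kappa> by simp
  have "2 * m \<le> (1 + \<delta>) * L + (1 - \<delta>) * m"
    using mult_left_mono[of m L "1 + \<delta>"] m \<delta> by (simp add: algebra_simps)
  then have "\<alpha> * m \<le> 1"
    using upper mult_left_mono[OF _ \<open>0 \<le> \<alpha>\<close>] by fastforce
  then have \<rho>_nonneg: "0 \<le> \<rho>"
    using \<rho> \<delta> mult_le_one[of "\<alpha> * m" "1 - \<delta>"] by simp
  have "(1 / (1 - \<delta>)) * (2 / (L + m) - \<delta> / m) = (2 * m - \<delta> * (L + m)) / ((1 - \<delta>) * (m * (L + m)))"
    using m \<delta> by (simp add: field_simps)
  with lower have "(2 * m - \<delta> * (L + m)) / ((1 - \<delta>) * (m * (L + m))) < \<alpha>"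
    by simp
  moreover have "0 < (1 - \<delta>) * (m * (L + m))"
    using m \<delta> by simp
  ultimately have "2 * m - \<delta> * (L + m) < \<alpha> * ((1 - \<delta>) * (m * (L + m)))"
    by (simp add: pos_divide_less_eq)
  moreover have "m * (\<kappa> - 1 + (\<kappa> + 1) * (\<delta> - \<rho>))
      = \<alpha> * ((1 - \<delta>) * (m * (L + m))) - (2 * m - \<delta> * (L + m))"
    unfolding \<rho> L by (simp add: algebra_simps)
  ultimately have "0 < m * (\<kappa> - 1 + (\<kappa> + 1) * (\<delta> - \<rho>))"
    by simp
  then have "0 < \<kappa> - 1 + (\<kappa> + 1) * (\<delta> - \<rho>)"
    using m by (simp add: zero_less_mult_iff)
  moreover have "1 < \<kappa>"
    using m unfolding \<kappa> by (simp add: less_divide_eq)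
  ultimately show ?thesis
    using \<rho>_nonneg \<delta> by (simp add: divide_nonneg_pos)
qed

theorem lemma3p4:
  fixes m L \<kappa> \<delta> \<alpha> \<rho>s lams \<gamma>s :: real
  assumes "0 < m" and "m < L"
    and "\<kappa> = L / m"
    and "0 < \<delta>" and "\<delta> < 1"
    and "\<alpha> > (1 / (1 - \<delta>)) * (2 / (L + m) - \<delta> / m)"
    and "1 / L \<le> \<alpha>"
    and "\<alpha> \<le> 2 / ((1 + \<delta>) * L + (1 - \<delta>) * m)"
    and "\<rho>s = 1 - \<alpha> * m * (1 - \<delta>)"
    and "lams = (2 - \<alpha> * (L + m)) / \<delta> ^ 2"
    and "\<gamma>s = \<rho>s * (\<kappa> - 1 + (\<kappa> + 1) * (\<delta> - \<rho>s)) / ((\<kappa> - (1 - \<delta>)) * \<delta>)"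
  shows "deriv (\<lambda>t. F_fun \<alpha> L m \<delta> t \<rho>s lams \<gamma>s) 0 \<le> 0"
proof -
  have L: "0 < L" using assms(1,2) by simp
  then have "0 \<le> \<alpha>" "1 \<le> \<alpha> * L"
    using assms(7) by (auto simp: pos_divide_le_eq intro: order_trans[of 0 "1 / L"])
  moreover have upper: "\<alpha> * ((1 + \<delta>) * L + (1 - \<delta>) * m) \<le> 2"
    using assms(1,4,5,8) L by (simp add: le_divide_eq add_pos_pos)
  moreover have lam: "lams * \<delta>\<^sup>2 = 2 - \<alpha> * (L + m)"
    using assms(4,10) by simp
  ultimately have B: "\<alpha> * ((L - m) - m * lams * (1 - \<delta>\<^sup>2)) * (\<alpha> * L - 1)
      + lams * (\<alpha> * L - 1 - \<rho>s\<^sup>2) \<le> 0"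
    using assms(1,4,5,9) by (intro deriv_F_fun_bracket_nonpos) auto
  have \<gamma>: "0 \<le> \<gamma>s"
    unfolding assms(11) using assms \<open>0 \<le> \<alpha>\<close> upper by (intro gamma_star_nonneg) auto
  have "- (\<alpha> * L - 1) * \<gamma>s \<le> 0"
    using \<open>1 \<le> \<alpha> * L\<close> \<gamma> by (intro mult_nonpos_nonneg) auto
  with B \<gamma> show ?thesis
    unfolding deriv_F_fun_at_0 lam by (simp add: mult_nonneg_nonpos)
qed

end
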